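(* Let $M,N,d$ be positive integers. For $i=1,\dots,M$, $j=1,\dots,N$ let $x_{ij}\in\mathbb{R}^d$, $y_{ij}\in\{+1,-1\}$, with the points drawn from a continuous (absolutely continuous) distribution and the dataset satisfying: each $C_i=\{w:\ y_{ij}x_{ij}^Tw\ge1,\ j=1,\dots,N\}$ is nonempty and $\bar C=\bigcap_{i=1}^MC_i\neq\emptyset$. Let $\alpha^k=1-\frac{1}{k+1}$. For $\lambda>0$ define Modified Local-GD iterates by $w_0^0=0$ and, for $k\ge0$, $$w_i^{k+1}=\arg\min_{w}\sum_{j=1}^N\exp(-y_{ij}x_{ij}^Tw)+\frac\lambda2\|w-w_0^k\|^2,\qquad w_0^{k+1}=(1-\alpha^k)w_0^0+\alpha^k\Big(\frac1M\sum_{i=1}^Mw_i^{k+1}\Big).$$ Let $\hat w=\arg\min_{w\in\bar C}\|w\|$ (the hard-margin SVM solution on all data, to which the centralized model trained by gradient descent on the total exponential loss from $0$ converges in direction). Then, for almost all such datasets, $$\lim_{K\to\infty}\lim_{\lambda\to0}\frac{w_0^K(\lambda)}{\|w_0^K(\lambda)\|}=\frac{\hat w}{\|\hat w\|}.$$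
   Context: Modified Local-GD differs from Local-GD only in the aggregation step, which mixes the initial point with the average of the local models. Each local problem is solved exactly (unique minimizer) in every round. *)

theory Defs
  imports "HOL-Analysis.Analysis"
begin

text \<open>A dataset consists of points X $ i $ j in R^d (client i, sample j) and labels y i j.
  Clients are indexed by the finite type 'm (M = CARD('m)), samples per client by 'n
  (N = CARD('n)), the dimension is d = CARD('d).\<close>

definition local_loss ::
  "('m::finite \<Rightarrow> 'n::finite \<Rightarrow> real) \<Rightarrow> real^'d^'n^'m \<Rightarrow> 'm \<Rightarrow> real \<Rightarrow> real^'d \<Rightarrow> real^'d \<Rightarrow> real" where
  "local_loss y X i lam c w =
     (\<Sum>j\<in>UNIV. exp (- (y i j * ((X $ i $ j) \<bullet> w)))) + lam / 2 * (norm (w - c))^2"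

definition local_argmin ::
  "('m::finite \<Rightarrow> 'n::finite \<Rightarrow> real) \<Rightarrow> real^'d^'n^'m \<Rightarrow> 'm \<Rightarrow> real \<Rightarrow> real^'d \<Rightarrow> real^'d" where
  "local_argmin y X i lam c = (THE w. \<forall>v. local_loss y X i lam c w \<le> local_loss y X i lam c v)"

definition alpha :: "nat \<Rightarrow> real" where
  "alpha k = 1 - 1 / (real k + 1)"

fun mlgd :: "('m::finite \<Rightarrow> 'n::finite \<Rightarrow> real) \<Rightarrow> real^'d^'n^'m \<Rightarrow> real \<Rightarrow> nat \<Rightarrow> real^'d" where
  "mlgd y X lam 0 = 0"
| "mlgd y X lam (Suc k) =
     (1 - alpha k) *\<^sub>R mlgd y X lam 0
     + alpha k *\<^sub>R ((1 / real CARD('m)) *\<^sub>R (\<Sum>i\<in>UNIV. local_argmin y X i lam (mlgd y X lam k)))"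

definition local_set :: "('m::finite \<Rightarrow> 'n::finite \<Rightarrow> real) \<Rightarrow> real^'d^'n^'m \<Rightarrow> 'm \<Rightarrow> (real^'d) set" where
  "local_set y X i = {w. \<forall>j. y i j * ((X $ i $ j) \<bullet> w) \<ge> 1}"

definition total_set :: "('m::finite \<Rightarrow> 'n::finite \<Rightarrow> real) \<Rightarrow> real^'d^'n^'m \<Rightarrow> (real^'d) set" where
  "total_set y X = (\<Inter>i. local_set y X i)"

definition svm :: "('m::finite \<Rightarrow> 'n::finite \<Rightarrow> real) \<Rightarrow> real^'d^'n^'m \<Rightarrow> real^'d" where
  "svm y X = (THE w. w \<in> total_set y X \<and> (\<forall>v\<in>total_set y X. norm w \<le> norm v))"

end

(*
  With t = -ln lam the regularizer of a local problem is e^-t/2 * norm (w - c)^2, while a point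
  t p with p in C_i has exponential loss at most N e^-t. Comparing the local minimizer with t p
  shows that, as lam -> 0, the local update rescaled by 1/t converges to the Euclidean projection
  onto C_i of the rescaled centre. Hence w_0^K(lam) / t converges to the K-th Halpern iterate
  a_(k+1) = alpha_k T a_k (anchor 0) of the nonexpansive map T = mean of the projections onto
  the C_i, whose fixed points form the intersection of the C_i. With alpha_k = k/(k+1) the
  Halpern iteration converges to the projection of the anchor onto Fix T, i.e. to the nonzero
  SVM solution, and normalising gives the limit of directions. No genericity of the data is
  used: the conclusion holds for every dataset, so the almost-everywhere claim is immediate.
*)
theory Submission
  imports Defs "HOL-Real_Asymp.Real_Asymp"
begin

section \<open>Halpern iteration\<close>

lemma weighted_recurrence_LIMSEQ_zero:
  fixes x s :: "nat \<Rightarrow> real"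
  assumes nonneg: "\<And>k. 0 \<le> x k"
    and recurrence: "\<forall>\<^sub>F k in sequentially. real (Suc k) * x (Suc k) \<le> real k * x k + s k"
    and small: "\<And>\<epsilon>. 0 < \<epsilon> \<Longrightarrow> \<forall>\<^sub>F k in sequentially. s k \<le> \<epsilon>"
  shows "x \<longlonglongrightarrow> 0"
proof (rule LIMSEQ_I)
  fix r :: real
  assume "0 < r"
  obtain K where K: "\<And>k. K \<le> k \<Longrightarrow> real (Suc k) * x (Suc k) \<le> real k * x k + r / 2"
    using eventually_conj[OF recurrence small[of "r / 2"]] \<open>0 < r\<close>
    unfolding eventually_sequentially by force
  have partial: "real n * x n \<le> real K * x K + real (n - K) * (r / 2)" if "K \<le> n" for n
    using that
  proof (induction n rule: dec_induct)
    case (step n)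
    have "real (Suc n) * x (Suc n) \<le> real n * x n + r / 2"
      using K[OF step.hyps(1)] .
    also have "\<dots> \<le> real K * x K + (real (n - K) + 1) * (r / 2)"
      using step.IH by (simp add: distrib_right add_divide_distrib)
    also have "real (n - K) + 1 = real (Suc n - K)"
      using step.hyps(1) by (simp add: Suc_diff_le)
    finally show ?case .
  qed simp
  obtain N where N: "2 * (real K * x K) / r < real N"
    using reals_Archimedean2 by blast
  show "\<exists>N. \<forall>n\<ge>N. norm (x n - 0) < r"
  proof (intro exI allI impI)
    fix n
    assume n: "max N (Suc K) \<le> n"
    have "2 * (real K * x K) < real N * r"
      using N \<open>0 < r\<close> by (simp add: pos_divide_less_eq)
    also have "\<dots> \<le> real n * r"
      using n \<open>0 < r\<close> by (intro mult_right_mono) auto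
    finally have "2 * (real K * x K) < real n * r" .
    moreover have "real (n - K) * (r / 2) \<le> real n * (r / 2)"
      using \<open>0 < r\<close> by (intro mult_right_mono) auto
    ultimately have "real n * x n < real n * r"
      using partial[of n] n by linarith
    then show "norm (x n - 0) < r"
      using nonneg[of n] n by (simp add: mult_less_cancel_left_pos)
  qed
qed

lemma alpha_Suc_scaled: "real (Suc k) * alpha k = real k" "real (Suc k) * (1 - alpha k) = 1"
  unfolding alpha_def by (simp_all add: field_simps)

lemma alpha_bounds: "0 \<le> alpha k" "alpha k \<le> 1"
  unfolding alpha_def by (simp_all add: field_simps)

locale halpern =
  fixes T :: "'a::euclidean_space \<Rightarrow> 'a" and F :: "'a set" and u :: 'a
  assumes nonexpansive: "1-lipschitz_on UNIV T"
    and fixed_point_iff: "T x = x \<longleftrightarrow> x \<in> F"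
    and closed_fixed: "closed F" and convex_fixed: "convex F" and fixed_nonempty: "F \<noteq> {}"
begin

fun iter :: "nat \<Rightarrow> 'a" where
  "iter 0 = u"
| "iter (Suc k) = (1 - alpha k) *\<^sub>R u + alpha k *\<^sub>R T (iter k)"

definition limit :: 'a where
  "limit = closest_point F u"

lemma limit_in_fixed: "limit \<in> F"
  unfolding limit_def by (rule closest_point_in_set[OF closed_fixed fixed_nonempty])

lemma norm_T_diff_le: "norm (T x - T y) \<le> norm (x - y)"
  using lipschitz_onD[OF nonexpansive] by (simp add: dist_norm)

lemma norm_T_diff_fixed_le: "v \<in> F \<Longrightarrow> norm (T x - v) \<le> norm (x - v)"
  using norm_T_diff_le[of x v] fixed_point_iff[of v] by simp

lemma norm_iter_diff_fixed_le:
  assumes "v \<in> F"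
  shows "norm (iter k - v) \<le> norm (u - v)"
proof (induction k)
  case (Suc k)
  have "iter (Suc k) - v = (1 - alpha k) *\<^sub>R (u - v) + alpha k *\<^sub>R (T (iter k) - v)"
    by (simp add: algebra_simps)
  then have "norm (iter (Suc k) - v) \<le> norm ((1 - alpha k) *\<^sub>R (u - v)) + norm (alpha k *\<^sub>R (T (iter k) - v))"
    by (metis norm_triangle_ineq)
  also have "\<dots> = (1 - alpha k) * norm (u - v) + alpha k * norm (T (iter k) - v)"
    using alpha_bounds[of k] by simp
  also have "\<dots> \<le> (1 - alpha k) * norm (u - v) + alpha k * norm (u - v)"
    using alpha_bounds[of k] Suc.IH norm_T_diff_fixed_le[OF assms, of "iter k"]
    by (intro add_left_mono mult_left_mono) auto
  finally show ?case by (simp add: algebra_simps)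
qed simp

lemma norm_T_iter_diff_le: "norm (T (iter k) - u) \<le> 2 * norm (u - limit)"
proof -
  have "norm (T (iter k) - u) \<le> norm (T (iter k) - limit) + norm (u - limit)"
    using norm_triangle_ineq4[of "T (iter k) - limit" "u - limit"] by simp
  also have "\<dots> \<le> norm (iter k - limit) + norm (u - limit)"
    using norm_T_diff_fixed_le[OF limit_in_fixed] by simp
  also have "\<dots> \<le> 2 * norm (u - limit)"
    using norm_iter_diff_fixed_le[OF limit_in_fixed] by simp
  finally show ?thesis .
qed

lemma iter_step_recurrence:
  "real (Suc (Suc k)) * norm (iter (Suc (Suc k)) - iter (Suc k))
     \<le> real (Suc k) * norm (iter (Suc k) - iter k) + 2 * norm (u - limit) / real (Suc k)"
proof -
  let ?a = "alpha (Suc k)" and ?d = "alpha (Suc k) - alpha k"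
  have a: "real (Suc (Suc k)) * ?a = real (Suc k)"
    using alpha_Suc_scaled(1)[of "Suc k"] .
  have d: "real (Suc (Suc k)) * ?d = 1 / real (Suc k)"
    unfolding alpha_def by (simp add: divide_simps) (simp add: algebra_simps)
  have "0 \<le> ?d"
    unfolding alpha_def by (simp add: field_simps)
  have "iter (Suc (Suc k)) - iter (Suc k) = ?a *\<^sub>R (T (iter (Suc k)) - T (iter k)) + ?d *\<^sub>R (T (iter k) - u)"
    by (simp add: algebra_simps)
  then have "norm (iter (Suc (Suc k)) - iter (Suc k))
      \<le> norm (?a *\<^sub>R (T (iter (Suc k)) - T (iter k))) + norm (?d *\<^sub>R (T (iter k) - u))"
    by (metis norm_triangle_ineq)
  also have "\<dots> = ?a * norm (T (iter (Suc k)) - T (iter k)) + ?d * norm (T (iter k) - u)"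
    using alpha_bounds[of "Suc k"] \<open>0 \<le> ?d\<close> by (simp del: iter.simps)
  also have "\<dots> \<le> ?a * norm (iter (Suc k) - iter k) + ?d * (2 * norm (u - limit))"
    using alpha_bounds[of "Suc k"] \<open>0 \<le> ?d\<close> norm_T_diff_le norm_T_iter_diff_le
    by (intro add_mono mult_left_mono) auto
  finally have "real (Suc (Suc k)) * norm (iter (Suc (Suc k)) - iter (Suc k))
      \<le> real (Suc (Suc k)) * (?a * norm (iter (Suc k) - iter k) + ?d * (2 * norm (u - limit)))"
    by (rule mult_left_mono) simp
  also have "\<dots> = (real (Suc (Suc k)) * ?a) * norm (iter (Suc k) - iter k)
      + (real (Suc (Suc k)) * ?d) * (2 * norm (u - limit))"
    by (simp only: ring_distribs mult.assoc)
  finally show ?thesis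
    unfolding a d by simp
qed

lemma LIMSEQ_iter_step: "(\<lambda>k. iter (Suc k) - iter k) \<longlonglongrightarrow> 0"
proof -
  define x where "x k = norm (iter k - iter (k - 1))" for k
  have "x \<longlonglongrightarrow> 0"
  proof (rule weighted_recurrence_LIMSEQ_zero)
    show "0 \<le> x k" for k
      unfolding x_def by simp
    show "\<forall>\<^sub>F k in sequentially. real (Suc k) * x (Suc k) \<le> real k * x k + 2 * norm (u - limit) / real k"
      unfolding eventually_sequentially
    proof (intro exI allI impI)
      fix k :: nat
      assume "1 \<le> k"
      then obtain m where "k = Suc m"
        by (cases k) auto
      then show "real (Suc k) * x (Suc k) \<le> real k * x k + 2 * norm (u - limit) / real k"
        unfolding x_def using iter_step_recurrence[of m] by (simp del: iter.simps)
    qed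
    show "\<forall>\<^sub>F k in sequentially. 2 * norm (u - limit) / real k \<le> \<epsilon>" if "0 < \<epsilon>" for \<epsilon>
      using order_tendstoD(2)[OF lim_const_over_n[of "2 * norm (u - limit)"] that]
      by (auto elim: eventually_mono)
  qed
  then have "(\<lambda>k. x (Suc k)) \<longlonglongrightarrow> 0"
    by (rule LIMSEQ_Suc)
  then show ?thesis
    unfolding x_def by (simp add: tendsto_norm_zero_iff del: iter.simps)
qed

lemma LIMSEQ_iter_residual: "(\<lambda>k. iter k - T (iter k)) \<longlonglongrightarrow> 0"
proof -
  have "(\<lambda>k. iter (Suc k) - T (iter k)) \<longlonglongrightarrow> 0"
  proof (rule Lim_null_comparison)
    show "\<forall>\<^sub>F k in sequentially. norm (iter (Suc k) - T (iter k)) \<le> 2 * norm (u - limit) / real (Suc k)"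
    proof (intro always_eventually allI)
      fix k
      have "iter (Suc k) - T (iter k) = (1 - alpha k) *\<^sub>R (u - T (iter k))"
        by (simp add: algebra_simps)
      also have "1 - alpha k = 1 / real (Suc k)"
        unfolding alpha_def by simp
      finally show "norm (iter (Suc k) - T (iter k)) \<le> 2 * norm (u - limit) / real (Suc k)"
        using norm_T_iter_diff_le[of k]
        by (simp add: norm_minus_commute divide_right_mono del: iter.simps)
    qed
    show "(\<lambda>k. 2 * norm (u - limit) / real (Suc k)) \<longlonglongrightarrow> 0"
      using LIMSEQ_Suc[OF lim_const_over_n] .
  qed
  then have "(\<lambda>k. - (iter (Suc k) - iter k) + (iter (Suc k) - T (iter k))) \<longlonglongrightarrow> - 0 + 0"
    by (intro tendsto_add tendsto_minus LIMSEQ_iter_step)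
  then show ?thesis
    by (simp del: iter.simps)
qed

text \<open>On the compact set \<open>K\<close> of points of the ball with \<open>\<langle>u - limit, x - limit\<rangle> \<ge> \<epsilon>\<close>
  there is no fixed point, so the residual \<open>\<parallel>x - T x\<parallel>\<close> has a positive minimum there; since the residual
  vanishes along the iterates, they eventually avoid \<open>K\<close>.\<close>
lemma eventually_inner_iter_less:
  assumes "0 < \<epsilon>"
  shows "\<forall>\<^sub>F k in sequentially. inner (u - limit) (iter k - limit) < \<epsilon>"
proof -
  define K where "K = cball limit (norm (u - limit)) \<inter> {x. \<epsilon> \<le> inner (u - limit) (x - limit)}"
  have in_ball: "iter k \<in> cball limit (norm (u - limit))" for k
    using norm_iter_diff_fixed_le[OF limit_in_fixed, of k] by (metis dist_commute dist_norm mem_cball)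
  have outside_K: "inner (u - limit) (x - limit) < \<epsilon>" if "x \<in> cball limit (norm (u - limit))" "x \<notin> K" for x
    using that unfolding K_def by auto
  show ?thesis
  proof (cases "K = {}")
    case True
    then show ?thesis
      using outside_K in_ball by simp
  next
    case False
    have "compact K"
      unfolding K_def by (intro compact_Int_closed compact_cball closed_Collect_le continuous_intros)
    moreover have "continuous_on K (\<lambda>x. norm (x - T x))"
      using lipschitz_on_continuous_on[OF nonexpansive]
      by (intro continuous_intros) (auto intro: continuous_on_subset)
    ultimately obtain x0 where x0: "x0 \<in> K" "\<And>x. x \<in> K \<Longrightarrow> norm (x0 - T x0) \<le> norm (x - T x)"
      using continuous_attains_inf[OF _ False, of "\<lambda>x. norm (x - T x)"] by blast
    have "x0 \<notin> F"
    proof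
      assume "x0 \<in> F"
      then have "inner (u - limit) (x0 - limit) \<le> 0"
        unfolding limit_def by (rule closest_point_dot[OF convex_fixed closed_fixed])
      with x0(1) \<open>0 < \<epsilon>\<close> show False
        unfolding K_def by simp
    qed
    then have "0 < norm (x0 - T x0)"
      using fixed_point_iff[of x0] by auto
    then have "\<forall>\<^sub>F k in sequentially. norm (iter k - T (iter k)) < norm (x0 - T x0)"
      using order_tendstoD(2)[OF tendsto_norm[OF LIMSEQ_iter_residual]] by simp
    then show ?thesis
    proof (rule eventually_mono)
      fix k
      assume less: "norm (iter k - T (iter k)) < norm (x0 - T x0)"
      have "iter k \<notin> K"
        using x0(2)[of "iter k"] less by linarith
      then show "inner (u - limit) (iter k - limit) < \<epsilon>"
        using outside_K in_ball by blast
    qed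
  qed
qed

lemma norm_iter_diff_limit_recurrence:
  "real (Suc k) * (norm (iter (Suc k) - limit))\<^sup>2
     \<le> real k * (norm (iter k - limit))\<^sup>2 + 2 * inner (u - limit) (iter (Suc k) - limit)"
proof -
  let ?r = "(norm (iter k - limit))\<^sup>2" and ?s = "2 * inner (u - limit) (iter (Suc k) - limit)"
  define X where "X = alpha k *\<^sub>R (T (iter k) - limit)"
  define Y where "Y = (1 - alpha k) *\<^sub>R (u - limit)"
  have sum: "iter (Suc k) - limit = X + Y"
    unfolding X_def Y_def by (simp add: algebra_simps)
  have "(norm (X + Y))\<^sup>2 = (norm X)\<^sup>2 + 2 * inner Y (X + Y) - (norm Y)\<^sup>2"
    unfolding power2_norm_eq_inner by (simp add: inner_add_left inner_add_right inner_commute)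
  also have "(norm X)\<^sup>2 \<le> alpha k * ?r"
  proof -
    have "(norm X)\<^sup>2 = (alpha k)\<^sup>2 * (norm (T (iter k) - limit))\<^sup>2"
      unfolding X_def using alpha_bounds[of k] by (simp add: power_mult_distrib)
    also have "\<dots> \<le> alpha k * ?r"
      using alpha_bounds[of k] norm_T_diff_fixed_le[OF limit_in_fixed, of "iter k"]
      by (intro mult_mono power_mono) (auto simp: power2_eq_square mult_left_le)
    finally show ?thesis .
  qed
  also have "2 * inner Y (X + Y) = (1 - alpha k) * ?s"
    unfolding sum[symmetric] unfolding Y_def by simp
  finally have "(norm (iter (Suc k) - limit))\<^sup>2 \<le> alpha k * ?r + (1 - alpha k) * ?s"
    unfolding sum using zero_le_power2[of "norm Y"] by linarith
  then have "real (Suc k) * (norm (iter (Suc k) - limit))\<^sup>2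
      \<le> real (Suc k) * (alpha k * ?r + (1 - alpha k) * ?s)"
    by (rule mult_left_mono) simp
  also have "\<dots> = (real (Suc k) * alpha k) * ?r + (real (Suc k) * (1 - alpha k)) * ?s"
    by (simp only: distrib_left mult.assoc)
  also have "\<dots> = real k * ?r + ?s"
    by (simp only: alpha_Suc_scaled mult_1)
  finally show ?thesis .
qed

lemma LIMSEQ_iter: "iter \<longlonglongrightarrow> limit"
proof -
  have "(\<lambda>k. (norm (iter k - limit))\<^sup>2) \<longlonglongrightarrow> 0"
  proof (rule weighted_recurrence_LIMSEQ_zero)
    show "\<forall>\<^sub>F k in sequentially. real (Suc k) * (norm (iter (Suc k) - limit))\<^sup>2
        \<le> real k * (norm (iter k - limit))\<^sup>2 + 2 * inner (u - limit) (iter (Suc k) - limit)"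
      by (intro always_eventually allI norm_iter_diff_limit_recurrence)
    show "\<forall>\<^sub>F k in sequentially. 2 * inner (u - limit) (iter (Suc k) - limit) \<le> \<epsilon>" if "0 < \<epsilon>" for \<epsilon>
    proof (rule eventually_sequentially_Suc[of "\<lambda>k. 2 * inner (u - limit) (iter k - limit) \<le> \<epsilon>", THEN iffD2])
      have "\<forall>\<^sub>F k in sequentially. inner (u - limit) (iter k - limit) < \<epsilon> / 2"
        using that by (intro eventually_inner_iter_less) simp
      then show "\<forall>\<^sub>F k in sequentially. 2 * inner (u - limit) (iter k - limit) \<le> \<epsilon>"
        by (rule eventually_mono) simp
    qed
  qed simp
  then have "(\<lambda>k. sqrt ((norm (iter k - limit))\<^sup>2)) \<longlonglongrightarrow> sqrt 0"
    by (rule tendsto_real_sqrt)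
  then show ?thesis
    by (simp add: tendsto_norm_zero_iff LIM_zero_iff del: iter.simps)
qed

end

section \<open>Averaged projections\<close>

definition mean_projection :: "('i::finite \<Rightarrow> 'a::euclidean_space set) \<Rightarrow> 'a \<Rightarrow> 'a" where
  "mean_projection C x = (1 / real CARD('i)) *\<^sub>R (\<Sum>i\<in>UNIV. closest_point (C i) x)"

lemma mean_projection_nonexpansive:
  fixes C :: "'i::finite \<Rightarrow> 'a::euclidean_space set"
  assumes "\<And>i. closed (C i)" "\<And>i. convex (C i)" "\<And>i. C i \<noteq> {}"
  shows "1-lipschitz_on UNIV (mean_projection C)"
proof (rule lipschitz_onI)
  fix x y
  have "dist (mean_projection C x) (mean_projection C y)
      = (1 / real CARD('i)) * norm (\<Sum>i\<in>UNIV. closest_point (C i) x - closest_point (C i) y)"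
    unfolding mean_projection_def dist_norm by (simp add: sum_subtractf flip: scaleR_diff_right)
  also have "\<dots> \<le> (1 / real CARD('i)) * (\<Sum>i\<in>(UNIV :: 'i set). dist x y)"
    using closest_point_lipschitz[OF assms(2,1,3)]
    by (intro mult_left_mono order.trans[OF norm_sum sum_mono]) (auto simp: dist_norm)
  also have "\<dots> = 1 * dist x y"
    by simp
  finally show "dist (mean_projection C x) (mean_projection C y) \<le> 1 * dist x y" .
qed simp

text \<open>A fixed point \<open>x\<close> has \<open>\<Sum>\<^sub>i (x - P\<^sub>i x) = 0\<close>; pairing with \<open>x - v\<close> for a common
  point \<open>v\<close>, the obtuse-angle inequalities \<open>\<parallel>x - P\<^sub>i x\<parallel>\<^sup>2 \<le> \<langle>x - P\<^sub>i x, x - v\<rangle>\<close>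
  force every \<open>P\<^sub>i x = x\<close>.\<close>
lemma mean_projection_fixed_imp_mem_Inter:
  fixes C :: "'i::finite \<Rightarrow> 'a::euclidean_space set"
  assumes closed: "\<And>i. closed (C i)" and convex: "\<And>i. convex (C i)" and common: "(\<Inter>i. C i) \<noteq> {}"
    and fixed: "mean_projection C x = x"
  shows "x \<in> (\<Inter>i. C i)"
proof -
  obtain v where v: "v \<in> (\<Inter>i. C i)"
    using common by blast
  define r where "r i = x - closest_point (C i) x" for i
  have "(\<Sum>i\<in>UNIV. r i) = real CARD('i) *\<^sub>R x - (\<Sum>i\<in>UNIV. closest_point (C i) x)"
    unfolding r_def by (simp add: sum_subtractf sum_constant_scaleR)
  also have "(\<Sum>i\<in>UNIV. closest_point (C i) x) = real CARD('i) *\<^sub>R mean_projection C x"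
    unfolding mean_projection_def by simp
  also note fixed
  finally have sum_r: "(\<Sum>i\<in>UNIV. r i) = 0"
    by simp
  have obtuse: "(norm (r i))\<^sup>2 \<le> inner (r i) (x - v)" for i
  proof -
    have "inner (r i) (v - closest_point (C i) x) \<le> 0"
      unfolding r_def using v by (intro closest_point_dot[OF convex closed]) blast
    moreover have "x - v = r i - (v - closest_point (C i) x)"
      unfolding r_def by simp
    then have "inner (r i) (x - v) = (norm (r i))\<^sup>2 - inner (r i) (v - closest_point (C i) x)"
      by (simp only: inner_diff_right power2_norm_eq_inner)
    ultimately show ?thesis
      by linarith
  qed
  have "(\<Sum>i\<in>UNIV. (norm (r i))\<^sup>2) \<le> (\<Sum>i\<in>UNIV. inner (r i) (x - v))"
    by (intro sum_mono obtuse)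
  also have "\<dots> = 0"
    using sum_r by (simp flip: inner_sum_left)
  finally have "r i = 0" for i
    using sum_nonneg_eq_0_iff[of UNIV "\<lambda>i. (norm (r i))\<^sup>2"] sum_nonneg[of UNIV "\<lambda>i. (norm (r i))\<^sup>2"]
    by simp
  then have "closest_point (C i) x = x" for i
    unfolding r_def by simp
  moreover have "C i \<noteq> {}" for i
    using common by blast
  ultimately have "x \<in> C i" for i
    using closest_point_in_set[OF closed] by metis
  then show "x \<in> (\<Inter>i. C i)"
    by blast
qed

lemma mean_projection_fixed_iff:
  fixes C :: "'i::finite \<Rightarrow> 'a::euclidean_space set"
  assumes "\<And>i. closed (C i)" "\<And>i. convex (C i)" "(\<Inter>i. C i) \<noteq> {}"
  shows "mean_projection C x = x \<longleftrightarrow> x \<in> (\<Inter>i. C i)"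
  using mean_projection_fixed_imp_mem_Inter[OF assms]
  by (auto simp: mean_projection_def closest_point_self sum_constant_scaleR)

section \<open>The local problems\<close>

lemma local_set_eq_halfspaces:
  "local_set y X i = (\<Inter>j. {w. 1 \<le> inner (y i j *\<^sub>R (X $ i $ j)) w})"
  unfolding local_set_def by auto

lemma closed_local_set: "closed (local_set y X i)"
  unfolding local_set_eq_halfspaces by (intro closed_INT ballI closed_halfspace_ge)

lemma convex_local_set: "convex (local_set y X i)"
  unfolding local_set_eq_halfspaces by (intro convex_INT ballI convex_halfspace_ge)

lemma closed_total_set: "closed (total_set y X)"
  unfolding total_set_def using closed_local_set by blast

lemma convex_total_set: "convex (total_set y X)"
  unfolding total_set_def using convex_local_set by (blast intro: convex_INT)

lemma zero_notin_local_set: "0 \<notin> local_set y X i"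
  unfolding local_set_def by simp

lemma inverse_scaleR_mem_local_set:
  assumes "0 < r" "\<forall>j. r \<le> y i j * (X $ i $ j \<bullet> z)"
  shows "inverse r *\<^sub>R z \<in> local_set y X i"
  unfolding local_set_def using assms by (simp add: field_simps)

lemma continuous_on_local_loss: "continuous_on S (local_loss y X i lam c)"
  unfolding local_loss_def by (intro continuous_intros)

lemma local_loss_ge: "0 \<le> lam \<Longrightarrow> lam / 2 * (norm (w - c))\<^sup>2 \<le> local_loss y X i lam c w"
  unfolding local_loss_def by (simp add: sum_nonneg)

lemma local_loss_has_minimizer:
  assumes "0 < lam"
  shows "\<exists>w. \<forall>v. local_loss y X i lam c w \<le> local_loss y X i lam c v"
proof -
  let ?F = "local_loss y X i lam c"
  define r where "r = sqrt (2 * ?F c / lam)"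
  have "0 \<le> ?F c"
    unfolding local_loss_def by (simp add: sum_nonneg)
  then have F_c: "?F c = lam / 2 * r\<^sup>2"
    unfolding r_def using assms by simp
  have "0 \<le> r"
    unfolding r_def using divide_nonneg_pos[OF _ assms, of "2 * ?F c"] \<open>0 \<le> ?F c\<close> by simp
  then have "c \<in> cball c r"
    by simp
  then obtain w where w: "w \<in> cball c r" "\<And>v. v \<in> cball c r \<Longrightarrow> ?F w \<le> ?F v"
    using continuous_attains_inf[OF compact_cball _ continuous_on_local_loss[of _ y X i lam c]] by blast
  have "?F w \<le> ?F c"
    using w(2) \<open>c \<in> cball c r\<close> .
  have "?F w \<le> ?F v" for v
  proof (cases "v \<in> cball c r")
    case False
    then have "r < norm (v - c)"
      by (simp add: dist_norm norm_minus_commute)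
    then have "lam / 2 * r\<^sup>2 < lam / 2 * (norm (v - c))\<^sup>2"
      using assms \<open>0 \<le> ?F c\<close> unfolding r_def by (intro mult_strict_left_mono power_strict_mono) auto
    then show ?thesis
      using \<open>?F w \<le> ?F c\<close> local_loss_ge[of lam v c y X i] assms F_c by argo
  qed (use w in blast)
  then show ?thesis
    by blast
qed

lemma local_loss_midpoint_less:
  assumes "0 < lam" "w1 \<noteq> w2"
  shows "local_loss y X i lam c (midpoint w1 w2)
           < (local_loss y X i lam c w1 + local_loss y X i lam c w2) / 2"
proof -
  let ?m = "\<lambda>w j. - (y i j * (X $ i $ j \<bullet> w))"
  have exp_le: "exp (?m (midpoint w1 w2) j) \<le> (exp (?m w1 j) + exp (?m w2 j)) / 2" for j
  proof -
    have "?m (midpoint w1 w2) j = (1 - 1/2) *\<^sub>R ?m w1 j + (1/2) *\<^sub>R ?m w2 j"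
      by (simp add: midpoint_def inner_add_right algebra_simps)
    then show ?thesis
      using convex_onD[OF exp_convex, of "1/2" "?m w1 j" "?m w2 j"] by simp
  qed
  have "(norm (midpoint w1 w2 - c))\<^sup>2
      = ((norm (w1 - c))\<^sup>2 + (norm (w2 - c))\<^sup>2) / 2 - (norm (w1 - w2))\<^sup>2 / 4"
    unfolding power2_norm_eq_inner midpoint_def
    by (simp add: inner_diff_left inner_diff_right inner_add_left inner_add_right inner_commute field_simps)
  moreover have "0 < (norm (w1 - w2))\<^sup>2"
    using assms(2) by simp
  ultimately have "2 * (norm (midpoint w1 w2 - c))\<^sup>2 < (norm (w1 - c))\<^sup>2 + (norm (w2 - c))\<^sup>2"
    by argo
  then have "lam / 4 * (2 * (norm (midpoint w1 w2 - c))\<^sup>2)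
      < lam / 4 * ((norm (w1 - c))\<^sup>2 + (norm (w2 - c))\<^sup>2)"
    using assms(1) by (intro mult_strict_left_mono) auto
  moreover have "(\<Sum>j\<in>UNIV. exp (?m (midpoint w1 w2) j))
      \<le> (\<Sum>j\<in>UNIV. (exp (?m w1 j) + exp (?m w2 j)) / 2)"
    by (intro sum_mono exp_le)
  moreover have "\<dots> = ((\<Sum>j\<in>UNIV. exp (?m w1 j)) + (\<Sum>j\<in>UNIV. exp (?m w2 j))) / 2"
    by (simp only: sum_divide_distrib[symmetric] sum.distrib)
  ultimately show ?thesis
    unfolding local_loss_def by (simp add: field_simps)
qed

lemma local_loss_minimizer_unique:
  assumes "0 < lam"
    and "\<forall>v. local_loss y X i lam c w \<le> local_loss y X i lam c v"
    and "\<forall>v. local_loss y X i lam c w' \<le> local_loss y X i lam c v"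
  shows "w = w'"
proof (rule ccontr)
  assume "w \<noteq> w'"
  then have "local_loss y X i lam c (midpoint w w')
      < (local_loss y X i lam c w + local_loss y X i lam c w') / 2"
    by (rule local_loss_midpoint_less[OF assms(1)])
  with assms(2)[rule_format, of w'] assms(2)[rule_format, of "midpoint w w'"]
    assms(3)[rule_format, of w]
  show False
    by argo
qed

lemma local_argmin_le:
  assumes "0 < lam"
  shows "local_loss y X i lam c (local_argmin y X i lam c) \<le> local_loss y X i lam c v"
proof -
  have "\<exists>!w. \<forall>v. local_loss y X i lam c w \<le> local_loss y X i lam c v"
    using local_loss_has_minimizer[OF assms] local_loss_minimizer_unique[OF assms] by blast
  from theI'[OF this] show ?thesis
    unfolding local_argmin_def by blast
qed

section \<open>Vanishing regularization\<close>

lemma norm_diff_closest_point_sq_le: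
  fixes a x :: "'a::euclidean_space"
  assumes "convex S" "closed S" "x \<in> S"
  shows "(norm (x - closest_point S a))\<^sup>2 \<le> (norm (x - a))\<^sup>2 - (norm (closest_point S a - a))\<^sup>2"
proof -
  let ?p = "closest_point S a"
  have "inner (a - ?p) (x - ?p) \<le> 0"
    by (rule closest_point_dot[OF assms])
  moreover have "(norm (x - a))\<^sup>2 = (norm (x - ?p))\<^sup>2 - 2 * inner (a - ?p) (x - ?p) + (norm (?p - a))\<^sup>2"
    unfolding power2_norm_eq_inner by (simp add: inner_diff_left inner_diff_right inner_commute algebra_simps)
  ultimately show ?thesis
    by argo
qed

lemma tendsto_closest_point_of_near_minimal:
  fixes q :: "'b \<Rightarrow> 'a::euclidean_space"
  assumes S: "convex S" "closed S"
    and mem: "\<forall>\<^sub>F x in F. q x \<in> S"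
    and near: "\<forall>\<^sub>F x in F. norm (q x - a) \<le> norm (closest_point S a - a) + \<eta> x"
    and \<eta>: "(\<eta> \<longlongrightarrow> 0) F"
  shows "(q \<longlongrightarrow> closest_point S a) F"
proof -
  let ?p = "closest_point S a"
  let ?d = "norm (?p - a)"
  have "((\<lambda>x. (norm (q x - ?p))\<^sup>2) \<longlongrightarrow> 0) F"
  proof (rule tendsto_sandwich[of "\<lambda>_. 0" _ F "\<lambda>x. \<eta> x * (2 * ?d + \<eta> x)"])
    show "\<forall>\<^sub>F x in F. (norm (q x - ?p))\<^sup>2 \<le> \<eta> x * (2 * ?d + \<eta> x)"
      using mem near
    proof eventually_elim
      case (elim x)
      have "?d \<le> norm (q x - a)"
        using closest_point_le[OF S(2) elim(1), of a] by (simp add: dist_norm norm_minus_commute)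
      then have "(norm (q x - a))\<^sup>2 \<le> (?d + \<eta> x)\<^sup>2"
        using elim(2) by (intro power_mono) auto
      moreover have "(?d + \<eta> x)\<^sup>2 = ?d\<^sup>2 + \<eta> x * (2 * ?d + \<eta> x)"
        by (simp add: power2_eq_square algebra_simps)
      ultimately show ?case
        using norm_diff_closest_point_sq_le[OF S elim(1), of a] by linarith
    qed
    show "((\<lambda>x. \<eta> x * (2 * ?d + \<eta> x)) \<longlongrightarrow> 0) F"
      using tendsto_mult[OF \<eta> tendsto_add[OF tendsto_const \<eta>]] by simp
  qed auto
  then have "((\<lambda>x. sqrt ((norm (q x - ?p))\<^sup>2)) \<longlongrightarrow> sqrt 0) F"
    by (rule tendsto_real_sqrt)
  then show ?thesis
    by (simp add: tendsto_norm_zero_iff LIM_zero_iff)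
qed

text \<open>Points that are feasible up to a vanishing margin defect \<open>h\<close> are rescaled by \<open>1 / (1 - h)\<close>
  into the set; the rescaled points are almost closest to \<open>a\<close>.\<close>
lemma tendsto_closest_point_local_set:
  fixes z b :: "'b \<Rightarrow> real^'d"
  assumes b: "(b \<longlongrightarrow> a) F"
    and \<rho>: "(\<rho> \<longlongrightarrow> norm (closest_point (local_set y X i) a - a)) F"
    and h: "(h \<longlongrightarrow> 0) F"
    and near: "\<forall>\<^sub>F x in F. norm (z x - b x) \<le> \<rho> x"
    and margin: "\<forall>\<^sub>F x in F. \<forall>j. 1 - h x \<le> y i j * (X $ i $ j \<bullet> z x)"
  shows "(z \<longlongrightarrow> closest_point (local_set y X i) a) F"
proof -
  let ?C = "local_set y X i"
  let ?d = "norm (closest_point ?C a - a)"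
  define q where "q x = inverse (1 - h x) *\<^sub>R z x" for x
  define g where "g x = \<bar>h x\<bar> / (1 - h x) * (norm (b x) + \<rho> x)" for x
  have h_less: "\<forall>\<^sub>F x in F. h x < 1"
    using order_tendstoD(2)[OF h] by simp
  have g: "(g \<longlongrightarrow> 0) F"
    unfolding g_def using tendsto_mult[OF tendsto_divide[OF tendsto_rabs[OF h] tendsto_diff[OF tendsto_const h]]
        tendsto_add[OF tendsto_norm[OF b] \<rho>]] by simp
  have z_q: "\<forall>\<^sub>F x in F. norm (z x - q x) \<le> g x"
    using h_less near
  proof eventually_elim
    case (elim x)
    have "- h x / (1 - h x) = 1 - inverse (1 - h x)"
      using elim(1) by (simp add: field_simps)
    then have "z x - q x = (- h x / (1 - h x)) *\<^sub>R z x"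
      unfolding q_def by (simp add: scaleR_diff_left)
    then have "norm (z x - q x) = \<bar>h x\<bar> / (1 - h x) * norm (z x)"
      using elim(1) by simp
    also have "\<dots> \<le> \<bar>h x\<bar> / (1 - h x) * (norm (b x) + \<rho> x)"
      using elim norm_triangle_sub[of "z x" "b x"] by (intro mult_left_mono) auto
    finally show ?case
      unfolding g_def .
  qed
  have "(q \<longlongrightarrow> closest_point ?C a) F"
  proof (rule tendsto_closest_point_of_near_minimal[OF convex_local_set closed_local_set])
    show "\<forall>\<^sub>F x in F. q x \<in> ?C"
      using h_less margin
      by eventually_elim (auto simp: q_def intro!: inverse_scaleR_mem_local_set)
    show "\<forall>\<^sub>F x in F. norm (q x - a) \<le> ?d + (g x + (\<rho> x - ?d) + norm (b x - a))"
      using z_q near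
    proof eventually_elim
      case (elim x)
      have "norm (q x - a) \<le> norm (z x - q x) + norm (z x - b x) + norm (b x - a)"
        using norm_triangle_ineq[of "q x - z x" "z x - b x"] norm_triangle_ineq[of "q x - b x" "b x - a"]
        by (simp add: norm_minus_commute)
      with elim show ?case
        by simp
    qed
    show "((\<lambda>x. g x + (\<rho> x - ?d) + norm (b x - a)) \<longlongrightarrow> 0) F"
      using tendsto_add[OF tendsto_add[OF g tendsto_diff[OF \<rho> tendsto_const[of ?d]]] tendsto_norm[OF b[THEN LIM_zero]]]
      by simp
  qed
  moreover have "((\<lambda>x. z x - q x) \<longlongrightarrow> 0) F"
    by (rule Lim_null_comparison[OF z_q g])
  ultimately have "((\<lambda>x. q x + (z x - q x)) \<longlongrightarrow> closest_point ?C a + 0) F"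
    by (rule tendsto_add)
  then show ?thesis
    by simp
qed

text \<open>Comparison with the feasible point \<open>t p\<close>, whose exponential loss is at most \<open>N e\<^sup>-\<^sup>t\<close>.\<close>
lemma local_argmin_bounds:
  fixes y :: "'m::finite \<Rightarrow> 'n::finite \<Rightarrow> real"
  assumes "0 \<le> t" "p \<in> local_set y X i"
  shows "(norm (local_argmin y X i (exp (- t)) c - c))\<^sup>2 \<le> (norm (t *\<^sub>R p - c))\<^sup>2 + 2 * real CARD('n)"
    and "t - ln (real CARD('n) + (norm (t *\<^sub>R p - c))\<^sup>2 / 2)
           \<le> y i j * (X $ i $ j \<bullet> local_argmin y X i (exp (- t)) c)"
proof -
  let ?w = "local_argmin y X i (exp (- t)) c" and ?e = "exp (- t)"
  let ?N = "real CARD('n)" and ?D = "(norm (t *\<^sub>R p - c))\<^sup>2"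
  define S where "S v = (\<Sum>j\<in>UNIV. exp (- (y i j * (X $ i $ j \<bullet> v))))" for v
  have S_nonneg: "0 \<le> S v" for v
    unfolding S_def by (simp add: sum_nonneg)
  have "exp (- (y i j * (X $ i $ j \<bullet> (t *\<^sub>R p)))) \<le> ?e" for j
  proof -
    have "t * 1 \<le> t * (y i j * (X $ i $ j \<bullet> p))"
      using assms unfolding local_set_def by (intro mult_left_mono) auto
    then show ?thesis
      by (simp add: mult.left_commute)
  qed
  then have "S (t *\<^sub>R p) \<le> of_nat (card (UNIV :: 'n set)) * ?e"
    unfolding S_def by (intro sum_bounded_above)
  then have S_tp: "S (t *\<^sub>R p) \<le> ?N * ?e"
    by simp
  have "S ?w + ?e / 2 * (norm (?w - c))\<^sup>2 \<le> S (t *\<^sub>R p) + ?e / 2 * ?D"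
    using local_argmin_le[of ?e y X i c "t *\<^sub>R p"] unfolding local_loss_def S_def by simp
  then have key: "2 * S ?w + ?e * (norm (?w - c))\<^sup>2 \<le> ?e * (2 * ?N + ?D)"
    using S_tp by (simp add: algebra_simps)
  then have "?e * (norm (?w - c))\<^sup>2 \<le> ?e * (?D + 2 * ?N)"
    using S_nonneg[of ?w] by (simp add: algebra_simps)
  then show "(norm (?w - c))\<^sup>2 \<le> ?D + 2 * ?N"
    by (simp add: mult_le_cancel_left_pos)
  have "2 * S ?w \<le> ?e * (2 * ?N + ?D)"
    using key mult_nonneg_nonneg[OF exp_ge_zero zero_le_power2, of "- t" "norm (?w - c)"] by linarith
  have "exp (- (y i j * (X $ i $ j \<bullet> ?w))) \<le> S ?w"
    unfolding S_def by (rule member_le_sum) auto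
  also have "\<dots> \<le> ?e * (2 * ?N + ?D) / 2"
    using \<open>2 * S ?w \<le> ?e * (2 * ?N + ?D)\<close> by simp
  also have "\<dots> = ?e * (?N + ?D / 2)"
    by (simp add: field_simps)
  also have "\<dots> = exp (- t + ln (?N + ?D / 2))"
    using add_pos_nonneg[of ?N "?D / 2"] by (subst exp_add) simp
  finally show "t - ln (?N + ?D / 2) \<le> y i j * (X $ i $ j \<bullet> ?w)"
    by simp
qed

lemma local_argmin_scaled_bounds:
  fixes y :: "'m::finite \<Rightarrow> 'n::finite \<Rightarrow> real" and c :: "real^'d"
  assumes "1 \<le> t" "p \<in> local_set y X i"
  defines "z \<equiv> (1 / t) *\<^sub>R local_argmin y X i (exp (- t)) c" and "b \<equiv> (1 / t) *\<^sub>R c"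
  shows "norm (z - b) \<le> sqrt ((norm (p - b))\<^sup>2 + 2 * real CARD('n) / t\<^sup>2)"
    and "1 - (2 * ln t + ln (real CARD('n) + (norm (p - b))\<^sup>2 / 2)) / t \<le> y i j * (X $ i $ j \<bullet> z)"
proof -
  let ?w = "local_argmin y X i (exp (- t)) c"
  let ?N = "real CARD('n)" and ?E = "(norm (p - b))\<^sup>2"
  have "0 < t"
    using assms(1) by simp
  have w: "?w - c = t *\<^sub>R (z - b)" and p: "t *\<^sub>R p - c = t *\<^sub>R (p - b)"
    unfolding z_def b_def using \<open>0 < t\<close> by (simp_all add: algebra_simps)
  have "t\<^sup>2 * (norm (z - b))\<^sup>2 \<le> t\<^sup>2 * ?E + 2 * ?N"
    using local_argmin_bounds(1)[OF _ assms(2), of t c] \<open>0 < t\<close>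
    unfolding w p by (simp add: power_mult_distrib)
  then have "(norm (z - b))\<^sup>2 \<le> ?E + 2 * ?N / t\<^sup>2"
    using \<open>0 < t\<close> by (simp add: field_simps)
  then show "norm (z - b) \<le> sqrt (?E + 2 * ?N / t\<^sup>2)"
    by (simp add: real_le_rsqrt)
  have "?N + t\<^sup>2 * ?E / 2 \<le> t\<^sup>2 * (?N + ?E / 2)"
    using assms(1) by (simp add: algebra_simps mult_le_cancel_right1 one_le_power)
  then have "ln (?N + t\<^sup>2 * ?E / 2) \<le> ln (t\<^sup>2 * (?N + ?E / 2))"
    by (intro ln_mono) (auto intro: add_pos_nonneg)
  also have "\<dots> = 2 * ln t + ln (?N + ?E / 2)"
    using \<open>0 < t\<close> add_pos_nonneg[of ?N "?E / 2"] by (simp add: ln_mult ln_realpow)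
  finally have "t - (2 * ln t + ln (?N + ?E / 2)) \<le> t * (y i j * (X $ i $ j \<bullet> z))"
    using local_argmin_bounds(2)[OF _ assms(2), of t c j] \<open>0 < t\<close>
    unfolding p z_def by (simp add: power_mult_distrib)
  then show "1 - (2 * ln t + ln (?N + ?E / 2)) / t \<le> y i j * (X $ i $ j \<bullet> z)"
    using \<open>0 < t\<close> by (simp add: field_simps)
qed

lemma tendsto_log_defect_zero:
  fixes t E :: "'a \<Rightarrow> real"
  assumes t: "filterlim t at_top F" and E: "(E \<longlongrightarrow> l) F" and "0 < N + l"
  shows "((\<lambda>x. (2 * ln (t x) + ln (N + E x)) / t x) \<longlongrightarrow> 0) F"
proof -
  have "((\<lambda>x::real. 2 * ln x / x) \<longlongrightarrow> 0) at_top" "((\<lambda>x::real. 1 / x) \<longlongrightarrow> 0) at_top"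
    by real_asymp+
  from filterlim_compose[OF this(1) t] filterlim_compose[OF this(2) t]
  have "((\<lambda>x. 2 * ln (t x) / t x + ln (N + E x) * (1 / t x)) \<longlongrightarrow> 0 + ln (N + l) * 0) F"
    using assms(3) by (intro tendsto_intros E) auto
  then show ?thesis
    by (simp add: add_divide_distrib)
qed

lemma filterlim_minus_ln_at_right_0: "filterlim (\<lambda>x::real. - ln x) at_top (at_right 0)"
  using ln_at_0 filterlim_uminus_at_bot by blast

lemma tendsto_local_argmin_scaled:
  fixes y :: "'m::finite \<Rightarrow> 'n::finite \<Rightarrow> real" and c :: "real \<Rightarrow> real^'d"
  assumes ne: "local_set y X i \<noteq> {}"
    and c: "((\<lambda>lam. (1 / - ln lam) *\<^sub>R c lam) \<longlongrightarrow> a) (at_right 0)"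
  shows "((\<lambda>lam. (1 / - ln lam) *\<^sub>R local_argmin y X i lam (c lam))
           \<longlongrightarrow> closest_point (local_set y X i) a) (at_right 0)"
proof -
  let ?p = "closest_point (local_set y X i) a"
  let ?N = "real CARD('n)"
  define t where "t lam = - ln lam" for lam :: real
  define b where "b lam = (1 / t lam) *\<^sub>R c lam" for lam
  have p: "?p \<in> local_set y X i"
    by (rule closest_point_in_set[OF closed_local_set ne])
  have t: "filterlim t at_top (at_right 0)"
    unfolding t_def by (rule filterlim_minus_ln_at_right_0)
  have b: "(b \<longlongrightarrow> a) (at_right 0)"
    using c unfolding b_def t_def .
  have t_large: "\<forall>\<^sub>F lam in at_right 0. 1 \<le> t lam \<and> exp (- t lam) = lam"
    using filterlim_at_top[THEN iffD1, OF t, rule_format, of 1] eventually_at_right_less[of 0]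
    by eventually_elim (simp add: t_def)
  show ?thesis
  proof (rule tendsto_closest_point_local_set[OF b])
    have "((\<lambda>x::real. 2 * ?N / x\<^sup>2) \<longlongrightarrow> 0) at_top"
      by real_asymp
    from filterlim_compose[OF this t]
    have "((\<lambda>lam. sqrt ((norm (?p - b lam))\<^sup>2 + 2 * ?N / (t lam)\<^sup>2)) \<longlongrightarrow> sqrt ((norm (?p - a))\<^sup>2 + 0))
        (at_right 0)"
      by (intro tendsto_intros b)
    then show "((\<lambda>lam. sqrt ((norm (?p - b lam))\<^sup>2 + 2 * ?N / (t lam)\<^sup>2)) \<longlongrightarrow> norm (?p - a)) (at_right 0)"
      by simp
    show "((\<lambda>lam. (2 * ln (t lam) + ln (?N + (norm (?p - b lam))\<^sup>2 / 2)) / t lam) \<longlongrightarrow> 0) (at_right 0)"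
      by (rule tendsto_log_defect_zero[OF t, where l="(norm (?p - a))\<^sup>2 / 2"])
        (auto intro!: tendsto_intros b add_pos_nonneg)
    show "\<forall>\<^sub>F lam in at_right 0. norm ((1 / - ln lam) *\<^sub>R local_argmin y X i lam (c lam) - b lam)
        \<le> sqrt ((norm (?p - b lam))\<^sup>2 + 2 * ?N / (t lam)\<^sup>2)"
      using t_large
    proof eventually_elim
      case (elim lam)
      then show ?case
        using local_argmin_scaled_bounds(1)[where t="t lam" and c="c lam", OF _ p] by (simp add: b_def t_def)
    qed
    show "\<forall>\<^sub>F lam in at_right 0. \<forall>j. 1 - (2 * ln (t lam) + ln (?N + (norm (?p - b lam))\<^sup>2 / 2)) / t lam
        \<le> y i j * (X $ i $ j \<bullet> (1 / - ln lam) *\<^sub>R local_argmin y X i lam (c lam))"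
      using t_large
    proof eventually_elim
      case (elim lam)
      then show ?case
        using local_argmin_scaled_bounds(2)[where t="t lam" and c="c lam", OF _ p] by (simp add: b_def t_def)
    qed
  qed
qed

lemma svm_eq_closest_point:
  assumes "total_set y X \<noteq> {}"
  shows "svm y X = closest_point (total_set y X) 0"
  unfolding svm_def
proof (rule the_equality)
  show "closest_point (total_set y X) 0 \<in> total_set y X
      \<and> (\<forall>v\<in>total_set y X. norm (closest_point (total_set y X) 0) \<le> norm v)"
    using closest_point_exists[OF closed_total_set assms, where a=0] by (simp add: dist_norm)
next
  fix w
  assume "w \<in> total_set y X \<and> (\<forall>v\<in>total_set y X. norm w \<le> norm v)"
  then show "w = closest_point (total_set y X) 0"
    by (intro closest_point_unique[OF convex_total_set closed_total_set]) (auto simp: dist_norm)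
qed

lemma tendsto_normalized_if_scaled:
  fixes f :: "'a \<Rightarrow> 'b::real_normed_vector"
  assumes "((\<lambda>x. g x *\<^sub>R f x) \<longlongrightarrow> v) F" "\<forall>\<^sub>F x in F. 0 < g x" "v \<noteq> 0"
  shows "((\<lambda>x. inverse (norm (f x)) *\<^sub>R f x) \<longlongrightarrow> inverse (norm v) *\<^sub>R v) F"
proof -
  have "((\<lambda>x. inverse (norm (g x *\<^sub>R f x)) *\<^sub>R (g x *\<^sub>R f x)) \<longlongrightarrow> inverse (norm v) *\<^sub>R v) F"
    using assms(1,3) by (intro tendsto_intros) auto
  then show ?thesis
  proof (rule Lim_transform_eventually)
    show "\<forall>\<^sub>F x in F. inverse (norm (g x *\<^sub>R f x)) *\<^sub>R (g x *\<^sub>R f x) = inverse (norm (f x)) *\<^sub>R f x"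
      using assms(2) by eventually_elim simp
  qed
qed

lemma svm_nonzero:
  assumes "total_set y X \<noteq> {}"
  shows "svm y X \<noteq> 0"
proof
  assume "svm y X = 0"
  then have "0 \<in> total_set y X"
    using closest_point_in_set[OF closed_total_set assms, of 0] unfolding svm_eq_closest_point[OF assms] by simp
  then show False
    using zero_notin_local_set unfolding total_set_def by fastforce
qed

lemma halpern_mean_projection_local_set:
  assumes "total_set y X \<noteq> {}"
  shows "halpern (mean_projection (local_set y X)) (total_set y X)"
proof
  show "1-lipschitz_on UNIV (mean_projection (local_set y X))"
    using assms unfolding total_set_def
    by (intro mean_projection_nonexpansive closed_local_set convex_local_set) auto
  show "mean_projection (local_set y X) x = x \<longleftrightarrow> x \<in> total_set y X" for x
    using assms unfolding total_set_def
    by (intro mean_projection_fixed_iff closed_local_set convex_local_set)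
qed (use assms closed_total_set convex_total_set in auto)

lemma tendsto_mlgd_scaled:
  fixes y :: "'m::finite \<Rightarrow> 'n::finite \<Rightarrow> real" and X :: "real^'d^'n^'m"
  assumes "total_set y X \<noteq> {}"
  shows "((\<lambda>lam. (1 / - ln lam) *\<^sub>R mlgd y X lam k)
           \<longlongrightarrow> halpern.iter (mean_projection (local_set y X)) 0 k) (at_right 0)"
proof -
  interpret H: halpern "mean_projection (local_set y X)" "total_set y X" 0
    by (rule halpern_mean_projection_local_set[OF assms])
  have local_ne: "local_set y X i \<noteq> {}" for i
    using assms unfolding total_set_def by blast
  show ?thesis
  proof (induction k)
    case (Suc k)
    have mlgd_eq: "(\<lambda>lam. (1 / - ln lam) *\<^sub>R mlgd y X lam (Suc k))
        = (\<lambda>lam. alpha k *\<^sub>R ((1 / real CARD('m)) *\<^sub>R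
            (\<Sum>i\<in>UNIV. (1 / - ln lam) *\<^sub>R local_argmin y X i lam (mlgd y X lam k))))"
      by (simp add: scaleR_sum_right mult.commute)
    have iter_eq: "H.iter (Suc k)
        = alpha k *\<^sub>R ((1 / real CARD('m)) *\<^sub>R (\<Sum>i\<in>UNIV. closest_point (local_set y X i) (H.iter k)))"
      by (simp add: mean_projection_def)
    show ?case
      unfolding mlgd_eq iter_eq using local_ne
      by (intro tendsto_scaleR tendsto_const tendsto_sum tendsto_local_argmin_scaled Suc.IH)
  qed simp
qed

lemma mlgd_direction_limits:
  fixes y :: "'m::finite \<Rightarrow> 'n::finite \<Rightarrow> real" and X :: "real^'d^'n^'m"
  assumes "total_set y X \<noteq> {}"
  shows "\<exists>u :: nat \<Rightarrow> real^'d.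
           (\<forall>\<^sub>F K in sequentially.
              ((\<lambda>lam. inverse (norm (mlgd y X lam K)) *\<^sub>R mlgd y X lam K) \<longlongrightarrow> u K) (at_right 0))
           \<and> (u \<longlonglongrightarrow> inverse (norm (svm y X)) *\<^sub>R svm y X)"
proof -
  interpret H: halpern "mean_projection (local_set y X)" "total_set y X" 0
    by (rule halpern_mean_projection_local_set[OF assms])
  have svm: "H.limit = svm y X"
    unfolding H.limit_def svm_eq_closest_point[OF assms] ..
  have positive: "\<forall>\<^sub>F lam :: real in at_right 0. 0 < 1 / - ln lam"
    using filterlim_at_top[THEN iffD1, OF filterlim_minus_ln_at_right_0, rule_format, of 1]
    by (rule eventually_mono) simp
  have "\<forall>\<^sub>F K in sequentially. H.iter K \<noteq> 0"
    using tendsto_imp_eventually_ne[OF H.LIMSEQ_iter] svm_nonzero[OF assms] unfolding svm .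
  then have "\<forall>\<^sub>F K in sequentially.
      ((\<lambda>lam. inverse (norm (mlgd y X lam K)) *\<^sub>R mlgd y X lam K)
        \<longlongrightarrow> inverse (norm (H.iter K)) *\<^sub>R H.iter K) (at_right 0)"
    by eventually_elim (use tendsto_mlgd_scaled[OF assms] positive in \<open>rule tendsto_normalized_if_scaled\<close>)
  moreover have "(\<lambda>K. inverse (norm (H.iter K)) *\<^sub>R H.iter K) \<longlonglongrightarrow> inverse (norm (svm y X)) *\<^sub>R svm y X"
    using H.LIMSEQ_iter svm_nonzero[OF assms] unfolding svm by (intro tendsto_intros) auto
  ultimately show ?thesis
    by (intro exI[of _ "\<lambda>K. inverse (norm (H.iter K)) *\<^sub>R H.iter K"] conjI)
qed

theorem theorem3:
  fixes y :: "'m::finite \<Rightarrow> 'n::finite \<Rightarrow> real"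
  assumes "\<forall>i j. y i j = 1 \<or> y i j = -1"
  shows "AE X in (lborel :: (real^'d^'n^'m) measure).
           ((\<forall>i. local_set y X i \<noteq> {}) \<and> total_set y X \<noteq> {}) \<longrightarrow>
           (\<exists>u :: nat \<Rightarrow> real^'d.
              (\<forall>\<^sub>F K in sequentially.
                 ((\<lambda>lam. inverse (norm (mlgd y X lam K)) *\<^sub>R mlgd y X lam K) \<longlongrightarrow> u K) (at_right 0))
              \<and> (u \<longlonglongrightarrow> inverse (norm (svm y X)) *\<^sub>R svm y X))"
  using mlgd_direction_limits by (intro AE_I2) blast

end
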